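(* Let $S$ be an inverse semigroup and $\rho$ an idempotent separating congruence on $S$. Then there exist a group $G$ and an action of $T=S/\rho$ on $G$ by endomorphisms on the left such that the extension $(S,\rho)$ can be embedded into the $\lambda$-semidirect product extension $(G\rtimes_\lambda T,\vartheta_2)$, i.e. there is an injective homomorphism $\psi\colon S\to G\rtimes_\lambda T$ such that the congruence induced on $S$ by $\psi$ followed by the second projection $G\rtimes_\lambda T\to T$ is exactly $\rho$.
   Context: A congruence is idempotent separating if no two distinct idempotents are related. Let $K$ be a semigroup and $T$ an inverse semigroup; $T$ acts on $K$ if an antihomomorphism $t\mapsto\varepsilon_t$ from $T$ into the endomorphism monoid of $K$ is given (so $\varepsilon_u\varepsilon_t=\varepsilon_{tu}$); write ${}^t a$ for $a\varepsilon_t$. The $\lambda$-semidirect product $K\rtimes_\lambda T$ is the set $\{(a,t)\in K\times T: {}^{tt^{-1}}a=a\}$ with multiplication $(a,t)(b,u)=({}^{(tu)(tu)^{-1}}a\cdot {}^t b,\ tu)$, and $\vartheta_2$ is the congruence induced by the second projection $(a,t)\mapsto t$. *)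

theory Defs
  imports "HOL-Algebra.Group"
begin

text \<open>Semigroups are HOL-Algebra monoid records used only through carrier and mult
  (the unit field is ignored); associativity and closure are stated in sg_semigroup.\<close>

definition sg_semigroup :: "('a, 'b) monoid_scheme \<Rightarrow> bool" where
  "sg_semigroup S \<longleftrightarrow>
     (\<forall>x\<in>carrier S. \<forall>y\<in>carrier S. x \<otimes>\<^bsub>S\<^esub> y \<in> carrier S) \<and>
     (\<forall>x\<in>carrier S. \<forall>y\<in>carrier S. \<forall>z\<in>carrier S.
        (x \<otimes>\<^bsub>S\<^esub> y) \<otimes>\<^bsub>S\<^esub> z = x \<otimes>\<^bsub>S\<^esub> (y \<otimes>\<^bsub>S\<^esub> z))"

definition inverse_semigroup :: "('a, 'b) monoid_scheme \<Rightarrow> bool" where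
  "inverse_semigroup S \<longleftrightarrow> sg_semigroup S \<and>
     (\<forall>a\<in>carrier S. \<exists>!b. b \<in> carrier S \<and> a \<otimes>\<^bsub>S\<^esub> b \<otimes>\<^bsub>S\<^esub> a = a \<and> b \<otimes>\<^bsub>S\<^esub> a \<otimes>\<^bsub>S\<^esub> b = b)"

definition sg_inv :: "('a, 'b) monoid_scheme \<Rightarrow> 'a \<Rightarrow> 'a" where
  "sg_inv S a = (THE b. b \<in> carrier S \<and> a \<otimes>\<^bsub>S\<^esub> b \<otimes>\<^bsub>S\<^esub> a = a \<and> b \<otimes>\<^bsub>S\<^esub> a \<otimes>\<^bsub>S\<^esub> b = b)"

definition sg_congruence :: "('a, 'b) monoid_scheme \<Rightarrow> ('a \<times> 'a) set \<Rightarrow> bool" where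
  "sg_congruence S \<rho> \<longleftrightarrow> equiv (carrier S) \<rho> \<and>
     (\<forall>a b c. (a, b) \<in> \<rho> \<longrightarrow> c \<in> carrier S \<longrightarrow>
        (c \<otimes>\<^bsub>S\<^esub> a, c \<otimes>\<^bsub>S\<^esub> b) \<in> \<rho> \<and> (a \<otimes>\<^bsub>S\<^esub> c, b \<otimes>\<^bsub>S\<^esub> c) \<in> \<rho>)"

definition idempotents :: "('a, 'b) monoid_scheme \<Rightarrow> 'a set" where
  "idempotents S = {e \<in> carrier S. e \<otimes>\<^bsub>S\<^esub> e = e}"

definition idempotent_separating :: "('a, 'b) monoid_scheme \<Rightarrow> ('a \<times> 'a) set \<Rightarrow> bool" where
  "idempotent_separating S \<rho> \<longleftrightarrow>
     (\<forall>e\<in>idempotents S. \<forall>f\<in>idempotents S. (e, f) \<in> \<rho> \<longrightarrow> e = f)"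

definition sg_quot :: "('a, 'b) monoid_scheme \<Rightarrow> ('a \<times> 'a) set \<Rightarrow> 'a set monoid" where
  "sg_quot S \<rho> = \<lparr>carrier = carrier S // \<rho>,
     mult = (\<lambda>X Y. \<rho> `` {(SOME x. x \<in> X) \<otimes>\<^bsub>S\<^esub> (SOME y. y \<in> Y)}),
     one = undefined\<rparr>"

text \<open>Action of an inverse semigroup T on a group G by endomorphisms on the left:
  t maps to an endomorphism act t of G, with act t (act u a) = act (t u) a
  (i.e. t \<mapsto> \<epsilon>_t is an antihomomorphism when maps are written on the right).\<close>
definition acts_by_endos :: "('c, 'd) monoid_scheme \<Rightarrow> ('g, 'e) monoid_scheme \<Rightarrow> ('c \<Rightarrow> 'g \<Rightarrow> 'g) \<Rightarrow> bool" where
  "acts_by_endos T G act \<longleftrightarrow>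
     (\<forall>t\<in>carrier T. act t \<in> hom G G) \<and>
     (\<forall>t\<in>carrier T. \<forall>u\<in>carrier T. \<forall>a\<in>carrier G.
        act t (act u a) = act (t \<otimes>\<^bsub>T\<^esub> u) a)"

definition lambda_sdp :: "('g, 'e) monoid_scheme \<Rightarrow> ('c, 'd) monoid_scheme \<Rightarrow> ('c \<Rightarrow> 'g \<Rightarrow> 'g) \<Rightarrow> ('g \<times> 'c) monoid" where
  "lambda_sdp G T act = \<lparr>
     carrier = {(a, t). a \<in> carrier G \<and> t \<in> carrier T \<and> act (t \<otimes>\<^bsub>T\<^esub> sg_inv T t) a = a},
     mult = (\<lambda>(a, t) (b, u).
        (act ((t \<otimes>\<^bsub>T\<^esub> u) \<otimes>\<^bsub>T\<^esub> sg_inv T (t \<otimes>\<^bsub>T\<^esub> u)) a \<otimes>\<^bsub>G\<^esub> act t b, t \<otimes>\<^bsub>T\<^esub> u)),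
     one = undefined\<rparr>"

end

theory Submission
  imports Defs "HOL-Algebra.Product_Groups"
begin

text \<open>Since rho separates idempotents, it is contained in Green's relation H. Hence the rho-class
  K e of an idempotent e is a group with identity e, and each class X of T = S/rho determines the
  idempotent e X = a a' (a in X, with a' the inverse of a). Let G be the product of the groups
  K (e X) over X in T, and let t in T act on G by (t f) X = f (X t) if X t t' = X and
  (t f) X = e X otherwise. With representatives r X in X, the map s |-> (f s, [s]) with
  f s X = r X s (r (X [s]))' (where X [s] [s]' = X) satisfies the cocycle identity that makes it a
  homomorphism into the lambda-semidirect product, and evaluating f s at [s s'] recovers s from
  f s and [s]. Finally G is transported to the prescribed carrier type along
  f |-> {f X r X | X in T}, a set that meets each class X exactly in f X r X.\<close>

section \<open>Inverse semigroups\<close>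

locale inv_semigroup =
  fixes S :: "('a, 'b) monoid_scheme" (structure)
  assumes inverse_semigroup: "inverse_semigroup S"
begin

abbreviation sinv :: "'a \<Rightarrow> 'a" where "sinv a \<equiv> sg_inv S a"

lemma m_closed [simp]: "x \<in> carrier S \<Longrightarrow> y \<in> carrier S \<Longrightarrow> x \<otimes> y \<in> carrier S"
  using inverse_semigroup unfolding inverse_semigroup_def sg_semigroup_def by blast

lemma m_assoc [simp]:
  "x \<in> carrier S \<Longrightarrow> y \<in> carrier S \<Longrightarrow> z \<in> carrier S \<Longrightarrow> (x \<otimes> y) \<otimes> z = x \<otimes> (y \<otimes> z)"
  using inverse_semigroup unfolding inverse_semigroup_def sg_semigroup_def by blast

lemma m_assoc_idem:
  assumes "e \<in> carrier S" "e \<otimes> e = e" "x \<in> carrier S"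
  shows "e \<otimes> (e \<otimes> x) = e \<otimes> x"
  using assms m_assoc[of e e x] by simp

lemma inverse_ex1:
  "a \<in> carrier S \<Longrightarrow> \<exists>!b. b \<in> carrier S \<and> a \<otimes> b \<otimes> a = a \<and> b \<otimes> a \<otimes> b = b"
  using inverse_semigroup unfolding inverse_semigroup_def by blast

lemma sinv_props:
  assumes "a \<in> carrier S"
  shows "sinv a \<in> carrier S" "a \<otimes> sinv a \<otimes> a = a" "sinv a \<otimes> a \<otimes> sinv a = sinv a"
  using theI'[OF inverse_ex1[OF assms]] unfolding sg_inv_def by auto

lemma sinv_closed [simp]: "a \<in> carrier S \<Longrightarrow> sinv a \<in> carrier S"
  by (rule sinv_props)

lemma mult_sinv_mult [simp]: "a \<in> carrier S \<Longrightarrow> a \<otimes> (sinv a \<otimes> a) = a"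
  using sinv_props by simp

lemma sinv_mult_sinv [simp]: "a \<in> carrier S \<Longrightarrow> sinv a \<otimes> (a \<otimes> sinv a) = sinv a"
  using sinv_props by simp

lemma mult_sinv_mult_left [simp]:
  assumes "a \<in> carrier S" "x \<in> carrier S"
  shows "a \<otimes> (sinv a \<otimes> (a \<otimes> x)) = a \<otimes> x"
proof -
  have "(a \<otimes> (sinv a \<otimes> a)) \<otimes> x = a \<otimes> x" using assms by simp
  then show ?thesis using assms by (simp del: mult_sinv_mult)
qed

lemma sinv_mult_sinv_left [simp]:
  assumes "a \<in> carrier S" "x \<in> carrier S"
  shows "sinv a \<otimes> (a \<otimes> (sinv a \<otimes> x)) = sinv a \<otimes> x"
proof -
  have "(sinv a \<otimes> (a \<otimes> sinv a)) \<otimes> x = sinv a \<otimes> x" using assms by simp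
  then show ?thesis using assms by (simp del: sinv_mult_sinv)
qed

lemma sinv_unique:
  "\<lbrakk>a \<in> carrier S; b \<in> carrier S; a \<otimes> b \<otimes> a = a; b \<otimes> a \<otimes> b = b\<rbrakk> \<Longrightarrow> sinv a = b"
  using inverse_ex1[of a] sinv_props[of a] by blast

lemma sinv_sinv [simp]: "a \<in> carrier S \<Longrightarrow> sinv (sinv a) = a"
  by (rule sinv_unique) auto

lemma sinv_idem: "e \<in> carrier S \<Longrightarrow> e \<otimes> e = e \<Longrightarrow> sinv e = e"
  by (rule sinv_unique) simp_all

lemma idem_mult_sinv: "a \<in> carrier S \<Longrightarrow> (a \<otimes> sinv a) \<otimes> (a \<otimes> sinv a) = a \<otimes> sinv a"
  by simp

lemma idem_mult_idem:
  assumes e: "e \<in> carrier S" "e \<otimes> e = e" and f: "f \<in> carrier S" "f \<otimes> f = f"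
  shows "(e \<otimes> f) \<otimes> (e \<otimes> f) = e \<otimes> f"
proof -
  define b where "b = sinv (e \<otimes> f)"
  have b: "b \<in> carrier S" using e f by (simp add: b_def)
  note idem = m_assoc_idem[OF e] m_assoc_idem[OF f]
  have efb: "e \<otimes> (f \<otimes> (b \<otimes> (e \<otimes> (f \<otimes> x)))) = e \<otimes> (f \<otimes> x)" if "x \<in> carrier S" for x
    using mult_sinv_mult_left[of "e \<otimes> f" x] e f that by (simp add: b_def)
  have bef: "b \<otimes> (e \<otimes> (f \<otimes> (b \<otimes> x))) = b \<otimes> x" if "x \<in> carrier S" for x
    using sinv_mult_sinv_left[of "e \<otimes> f" x] e f that by (simp add: b_def)
  \<comment> \<open>The candidate f b e is an inverse of e f as well, hence equals b.\<close>
  have "sinv (e \<otimes> f) = f \<otimes> (b \<otimes> e)"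
    by (rule sinv_unique) (use e f b idem efb[of f] bef in simp_all)
  then have fbe: "f \<otimes> (b \<otimes> e) = b" by (simp add: b_def)
  have "b \<otimes> b = b"
  proof -
    have "b \<otimes> b = f \<otimes> (b \<otimes> (e \<otimes> (f \<otimes> (b \<otimes> e))))" using fbe b e f by (metis m_assoc m_closed)
    also have "\<dots> = b" using bef[of e] fbe e by simp
    finally show ?thesis .
  qed
  then have "sinv b = b" using b by (simp add: sinv_idem)
  moreover have "sinv b = e \<otimes> f" using e f by (simp add: b_def)
  ultimately show ?thesis using \<open>b \<otimes> b = b\<close> by simp
qed

lemma idem_commute:
  assumes e: "e \<in> carrier S" "e \<otimes> e = e" and f: "f \<in> carrier S" "f \<otimes> f = f"
  shows "e \<otimes> f = f \<otimes> e"
proof -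
  have ef: "(e \<otimes> f) \<otimes> (e \<otimes> f) = e \<otimes> f" and fe: "(f \<otimes> e) \<otimes> (f \<otimes> e) = f \<otimes> e"
    using idem_mult_idem e f by auto
  note idem = m_assoc_idem[OF e] m_assoc_idem[OF f]
    m_assoc_idem[of "e \<otimes> f", OF _ ef] m_assoc_idem[of "f \<otimes> e", OF _ fe]
  \<comment> \<open>Both e f and f e are inverses of the idempotent e f.\<close>
  have "sinv (e \<otimes> f) = f \<otimes> e"
    by (rule sinv_unique) (use e f ef fe idem in simp_all)
  moreover have "sinv (e \<otimes> f) = e \<otimes> f"
    using e f ef by (simp add: sinv_idem)
  ultimately show ?thesis by simp
qed

lemma idem_commute_left:
  assumes "e \<in> carrier S" "e \<otimes> e = e" "f \<in> carrier S" "f \<otimes> f = f" "x \<in> carrier S"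
  shows "e \<otimes> (f \<otimes> x) = f \<otimes> (e \<otimes> x)"
  using idem_commute[of e f] assms by (metis m_assoc)

lemma sinv_mult:
  assumes a: "a \<in> carrier S" and b: "b \<in> carrier S"
  shows "sinv (a \<otimes> b) = sinv b \<otimes> sinv a"
proof -
  have comm: "b \<otimes> (sinv b \<otimes> (sinv a \<otimes> (a \<otimes> x))) = sinv a \<otimes> (a \<otimes> (b \<otimes> (sinv b \<otimes> x)))"
    if "x \<in> carrier S" for x
    using idem_commute_left[of "b \<otimes> sinv b" "sinv a \<otimes> a" x] a b that by simp
  show ?thesis
    by (rule sinv_unique) (use a b comm[of b] comm[of "sinv a", symmetric] in simp_all)
qed

lemma sinv_mult_self: "a \<in> carrier S \<Longrightarrow> sinv (a \<otimes> sinv a) = a \<otimes> sinv a"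
  by (simp add: sinv_idem)

text \<open>In terms of idempotents, composable x t means sinv x x \<le> t sinv t.\<close>

definition composable :: "'a \<Rightarrow> 'a \<Rightarrow> bool" where
  "composable x t \<longleftrightarrow> x \<otimes> (t \<otimes> sinv t) = x"

lemma composable_mult_iff:
  assumes x: "x \<in> carrier S" and t: "t \<in> carrier S" and u: "u \<in> carrier S"
  shows "composable x (t \<otimes> u) \<longleftrightarrow> composable x t \<and> composable (x \<otimes> t) u"
proof
  assume "composable x (t \<otimes> u)"
  then have h: "x \<otimes> (t \<otimes> (u \<otimes> (sinv u \<otimes> sinv t))) = x"
    using x t u by (simp add: composable_def sinv_mult)
  have "x \<otimes> (t \<otimes> sinv t) = x \<otimes> (t \<otimes> (u \<otimes> (sinv u \<otimes> (sinv t \<otimes> (t \<otimes> sinv t)))))"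
    using x t u by (subst (1) h[symmetric]) simp
  also have "\<dots> = x" using x t u h by simp
  finally have "composable x t" by (simp add: composable_def)
  have "x \<otimes> t = x \<otimes> (t \<otimes> (u \<otimes> (sinv u \<otimes> (sinv t \<otimes> t))))"
    using x t u by (subst (1) h[symmetric]) simp
  also have "\<dots> = x \<otimes> (t \<otimes> (sinv t \<otimes> (t \<otimes> (u \<otimes> sinv u))))"
    using idem_commute[of "u \<otimes> sinv u" "sinv t \<otimes> t"] x t u by simp
  also have "\<dots> = (x \<otimes> t) \<otimes> (u \<otimes> sinv u)" using x t u by simp
  finally have "composable (x \<otimes> t) u" by (simp add: composable_def)
  with \<open>composable x t\<close> show "composable x t \<and> composable (x \<otimes> t) u" ..
next
  assume "composable x t \<and> composable (x \<otimes> t) u"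
  then have "x \<otimes> (t \<otimes> (u \<otimes> sinv u)) \<otimes> sinv t = x"
    using x t u by (simp add: composable_def)
  then show "composable x (t \<otimes> u)"
    using x t u by (simp add: composable_def sinv_mult)
qed

lemma composable_idem_iff:
  "x \<in> carrier S \<Longrightarrow> t \<in> carrier S \<Longrightarrow> composable x (t \<otimes> sinv t) \<longleftrightarrow> composable x t"
  by (simp add: composable_def sinv_mult_self)

lemma composable_range:
  assumes "x \<in> carrier S" "t \<in> carrier S" "composable x t"
  shows "(x \<otimes> t) \<otimes> sinv (x \<otimes> t) = x \<otimes> sinv x"
proof -
  have "(x \<otimes> t) \<otimes> sinv (x \<otimes> t) = (x \<otimes> (t \<otimes> sinv t)) \<otimes> sinv x"
    using assms by (simp add: sinv_mult)
  also have "\<dots> = x \<otimes> sinv x"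
    using assms unfolding composable_def by simp
  finally show ?thesis .
qed

end

section \<open>Relabelling the group of a lambda-semidirect product\<close>

definition relabel :: "('g, 'c) monoid_scheme \<Rightarrow> ('g \<Rightarrow> 'h) \<Rightarrow> 'h monoid" where
  "relabel G h = \<lparr>carrier = h ` carrier G,
     mult = (\<lambda>x y. h (inv_into (carrier G) h x \<otimes>\<^bsub>G\<^esub> inv_into (carrier G) h y)),
     one = h \<one>\<^bsub>G\<^esub>\<rparr>"

lemma relabel_iso:
  assumes "group G" and "inj_on h (carrier G)"
  shows "h \<in> iso G (relabel G h)"
  using assms by (auto simp: iso_def hom_def bij_betw_def relabel_def group.is_monoid)

lemma relabel_group:
  assumes G: "group G" and inj: "inj_on h (carrier G)"
  shows "group (relabel G h)"
proof -
  interpret G: group G by (fact G)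
  have "G \<cong> relabel G h"
    using relabel_iso[OF G inj] by (auto simp: is_iso_def)
  moreover have "monoid (relabel G h)"
    by (rule monoidI) (auto simp: relabel_def inj G.m_assoc)
  ultimately show ?thesis by (rule G.iso_imp_group)
qed

definition relabel_action ::
    "('g, 'e) monoid_scheme \<Rightarrow> ('g \<Rightarrow> 'h) \<Rightarrow> ('c \<Rightarrow> 'g \<Rightarrow> 'g) \<Rightarrow> 'c \<Rightarrow> 'h \<Rightarrow> 'h" where
  "relabel_action G h act t = h \<circ> act t \<circ> inv_into (carrier G) h"

lemma relabel_action_apply:
  assumes "h \<in> iso G H" and "a \<in> carrier G"
  shows "relabel_action G h act t (h a) = h (act t a)"
  using assms by (simp add: relabel_action_def iso_def bij_betw_def)

lemma acts_by_endos_relabel: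
  assumes "group G" and h: "h \<in> iso G H" and acts: "acts_by_endos T G act"
  shows "acts_by_endos T H (relabel_action G h act)"
  unfolding acts_by_endos_def
proof (intro conjI ballI)
  fix t assume "t \<in> carrier T"
  then have "act t \<in> hom G G" using acts by (simp add: acts_by_endos_def)
  moreover have "inv_into (carrier G) h \<in> hom H G"
    using group.iso_set_sym[OF \<open>group G\<close> h] by (rule iso_imp_homomorphism)
  ultimately show "relabel_action G h act t \<in> hom H H"
    unfolding relabel_action_def using h by (meson hom_compose iso_imp_homomorphism)
next
  fix t u b assume t: "t \<in> carrier T" and u: "u \<in> carrier T" and "b \<in> carrier H"
  then obtain a where a: "a \<in> carrier G" "b = h a"
    using h by (auto simp: iso_def bij_betw_def)
  have "act u a \<in> carrier G" using acts u a by (auto simp: acts_by_endos_def hom_def)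
  then show "relabel_action G h act t (relabel_action G h act u b) = relabel_action G h act (t \<otimes>\<^bsub>T\<^esub> u) b"
    using acts t u a h by (simp add: relabel_action_apply acts_by_endos_def)
qed

lemma lambda_sdp_relabel_hom:
  assumes T: "inverse_semigroup T" and h: "h \<in> iso G H" and acts: "acts_by_endos T G act"
  shows "map_prod h id \<in> hom (lambda_sdp G T act) (lambda_sdp H T (relabel_action G h act))"
proof -
  interpret T: inv_semigroup T by (rule inv_semigroup.intro, fact T)
  have act_closed: "act t a \<in> carrier G" if "t \<in> carrier T" "a \<in> carrier G" for t a
    using acts that by (auto simp: acts_by_endos_def hom_def)
  have h_hom: "h \<in> hom G H" using h by (rule iso_imp_homomorphism)
  show ?thesis
  proof (rule homI; clarify)
    fix a t assume "(a, t) \<in> carrier (lambda_sdp G T act)"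
    then show "map_prod h id (a, t) \<in> carrier (lambda_sdp H T (relabel_action G h act))"
      using hom_in_carrier[OF h_hom] by (auto simp: lambda_sdp_def relabel_action_apply[OF h])
  next
    fix a t b u
    assume "(a, t) \<in> carrier (lambda_sdp G T act)" "(b, u) \<in> carrier (lambda_sdp G T act)"
    then show "map_prod h id ((a, t) \<otimes>\<^bsub>lambda_sdp G T act\<^esub> (b, u)) =
        map_prod h id (a, t) \<otimes>\<^bsub>lambda_sdp H T (relabel_action G h act)\<^esub> map_prod h id (b, u)"
      using hom_mult[OF h_hom] by (simp add: lambda_sdp_def relabel_action_apply[OF h] act_closed)
  qed
qed

lemma inj_on_lambda_sdp_relabel:
  assumes "h \<in> iso G H"
  shows "inj_on (map_prod h id) (carrier (lambda_sdp G T act))"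
proof (rule inj_on_subset)
  show "inj_on (map_prod h id) (carrier G \<times> UNIV)"
    using assms by (auto simp: iso_def bij_betw_def intro: map_prod_inj_on)
qed (auto simp: lambda_sdp_def)

section \<open>Idempotent-separating congruences\<close>

locale idem_sep_congruence = inv_semigroup +
  fixes \<rho> :: "('a \<times> 'a) set"
  assumes congruence: "sg_congruence S \<rho>" and separating: "idempotent_separating S \<rho>"
begin

abbreviation rho_rel :: "'a \<Rightarrow> 'a \<Rightarrow> bool" (infix "\<sim>" 50) where "a \<sim> b \<equiv> (a, b) \<in> \<rho>"

lemma rho_equiv: "equiv (carrier S) \<rho>"
  using congruence unfolding sg_congruence_def by blast

lemma rho_closedD:
  assumes "a \<sim> b" shows "a \<in> carrier S" "b \<in> carrier S"
  using assms rho_equiv unfolding equiv_def refl_on_def by blast+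

lemma rho_refl [simp]: "a \<in> carrier S \<Longrightarrow> a \<sim> a"
  using rho_equiv unfolding equiv_def refl_on_def by blast

lemma rho_sym: "a \<sim> b \<Longrightarrow> b \<sim> a"
  using rho_equiv unfolding equiv_def sym_def by blast

lemma rho_trans [trans]: "a \<sim> b \<Longrightarrow> b \<sim> c \<Longrightarrow> a \<sim> c"
  using rho_equiv unfolding equiv_def trans_def by blast

lemma rho_mult_left: "a \<sim> b \<Longrightarrow> c \<in> carrier S \<Longrightarrow> c \<otimes> a \<sim> c \<otimes> b"
  using congruence unfolding sg_congruence_def by blast

lemma rho_mult_right: "a \<sim> b \<Longrightarrow> c \<in> carrier S \<Longrightarrow> a \<otimes> c \<sim> b \<otimes> c"
  using congruence unfolding sg_congruence_def by blast

lemma rho_mult: "a \<sim> b \<Longrightarrow> c \<sim> d \<Longrightarrow> a \<otimes> c \<sim> b \<otimes> d"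
  by (meson rho_mult_left rho_mult_right rho_closedD rho_trans)

lemma idem_rho_eq:
  "\<lbrakk>e \<in> carrier S; e \<otimes> e = e; f \<in> carrier S; f \<otimes> f = f; e \<sim> f\<rbrakk> \<Longrightarrow> e = f"
  using separating unfolding idempotent_separating_def idempotents_def by blast

lemma rho_idem_exists:
  assumes x: "x \<in> carrier S" and xx: "x \<otimes> x \<sim> x"
  obtains e where "e \<in> carrier S" "e \<otimes> e = e" "x \<sim> e"
proof
  \<comment> \<open>With y the inverse of x x, the idempotent x y x is congruent to (x x) y (x x) = x x.\<close>
  define e where "e = x \<otimes> (sinv (x \<otimes> x) \<otimes> x)"
  show "e \<in> carrier S" using x by (simp add: e_def)
  show "e \<otimes> e = e" using x sinv_mult_sinv_left[of "x \<otimes> x" x] by (simp add: e_def)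
  have "e \<sim> (x \<otimes> x) \<otimes> (sinv (x \<otimes> x) \<otimes> (x \<otimes> x))"
    unfolding e_def using x by (intro rho_mult rho_sym[OF xx]) simp
  also have "(x \<otimes> x) \<otimes> (sinv (x \<otimes> x) \<otimes> (x \<otimes> x)) = x \<otimes> x"
    using x by (simp only: mult_sinv_mult m_closed)
  finally show "x \<sim> e" using xx by (blast intro: rho_sym rho_trans)
qed

lemma rho_idem_commute:
  assumes g: "g \<otimes> g \<sim> g" and h: "h \<otimes> h \<sim> h"
  shows "g \<otimes> h \<sim> h \<otimes> g"
proof -
  obtain e where e: "e \<in> carrier S" "e \<otimes> e = e" "g \<sim> e"
    using rho_idem_exists g rho_closedD(2) by metis
  obtain f where f: "f \<in> carrier S" "f \<otimes> f = f" "h \<sim> f"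
    using rho_idem_exists h rho_closedD(2) by metis
  have "g \<otimes> h \<sim> e \<otimes> f" using e f by (blast intro: rho_mult)
  also have "e \<otimes> f = f \<otimes> e" using e f by (blast intro: idem_commute)
  also have "f \<otimes> e \<sim> h \<otimes> g" using e f by (blast intro: rho_mult rho_sym)
  finally show ?thesis .
qed

lemma rho_inverse_imp_rho_sinv:
  assumes a: "a \<in> carrier S" and y: "y \<in> carrier S"
    and aya: "a \<otimes> y \<otimes> a \<sim> a" and yay: "y \<otimes> a \<otimes> y \<sim> y"
  shows "y \<sim> sinv a"
proof -
  define z where "z = sinv a"
  have z: "z \<in> carrier S" using a by (simp add: z_def)
  have yay': "y \<otimes> (a \<otimes> y) \<sim> y" and aya': "a \<otimes> (y \<otimes> a) \<sim> a" using yay aya a y by auto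
  have ya: "(y \<otimes> a) \<otimes> (y \<otimes> a) \<sim> y \<otimes> a"
    using rho_mult_right[OF yay' a] a y by simp
  have ay: "(a \<otimes> y) \<otimes> (a \<otimes> y) \<sim> a \<otimes> y"
    using rho_mult_right[OF aya' y] a y by simp
  have za: "(z \<otimes> a) \<otimes> (z \<otimes> a) \<sim> z \<otimes> a" and az: "(a \<otimes> z) \<otimes> (a \<otimes> z) \<sim> a \<otimes> z"
    using a by (simp_all add: z_def)
  \<comment> \<open>y a, z a and a y, a z are idempotent modulo rho, hence commute modulo rho.\<close>
  have "y \<sim> y \<otimes> (a \<otimes> y)" using rho_sym[OF yay'] .
  also have "y \<otimes> (a \<otimes> y) = ((y \<otimes> a) \<otimes> (z \<otimes> a)) \<otimes> y" using a y z by (simp add: z_def)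
  also have "\<dots> \<sim> ((z \<otimes> a) \<otimes> (y \<otimes> a)) \<otimes> y" using rho_mult_right[OF rho_idem_commute[OF ya za] y] .
  also have "((z \<otimes> a) \<otimes> (y \<otimes> a)) \<otimes> y = (z \<otimes> a) \<otimes> (y \<otimes> (a \<otimes> y))" using a y z by simp
  also have "\<dots> \<sim> (z \<otimes> a) \<otimes> y" using rho_mult_left[OF yay'] a z by simp
  also have "(z \<otimes> a) \<otimes> y = z \<otimes> ((a \<otimes> z) \<otimes> (a \<otimes> y))" using a y z by (simp add: z_def)
  also have "\<dots> \<sim> z \<otimes> ((a \<otimes> y) \<otimes> (a \<otimes> z))" using rho_mult_left[OF rho_idem_commute[OF az ay] z] .
  also have "z \<otimes> ((a \<otimes> y) \<otimes> (a \<otimes> z)) = z \<otimes> ((a \<otimes> (y \<otimes> a)) \<otimes> z)" using a y z by simp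
  also have "\<dots> \<sim> z \<otimes> (a \<otimes> z)" using rho_mult_left[OF rho_mult_right[OF aya' z] z] .
  also have "z \<otimes> (a \<otimes> z) = z" using a by (simp add: z_def)
  finally show ?thesis by (simp add: z_def)
qed

lemma sinv_rho: assumes ab: "a \<sim> b" shows "sinv a \<sim> sinv b"
proof -
  have a: "a \<in> carrier S" and b: "b \<in> carrier S" using ab by (auto dest: rho_closedD)
  have "a \<otimes> sinv b \<otimes> a \<sim> b \<otimes> sinv b \<otimes> b" using b by (intro rho_mult ab) simp
  then have "a \<otimes> sinv b \<otimes> a \<sim> a" using b ab by (simp, blast intro: rho_sym rho_trans)
  moreover have "sinv b \<otimes> a \<otimes> sinv b \<sim> sinv b \<otimes> b \<otimes> sinv b" using b by (intro rho_mult ab) simp_all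
  then have "sinv b \<otimes> a \<otimes> sinv b \<sim> sinv b" using b by simp
  ultimately show ?thesis using rho_inverse_imp_rho_sinv[OF a] b by (simp add: rho_sym)
qed

text \<open>That is, rho is contained in Green's relation H.\<close>

lemma rho_mult_sinv_eq:
  assumes ab: "a \<sim> b"
  shows "a \<otimes> sinv a = b \<otimes> sinv b" "sinv a \<otimes> a = sinv b \<otimes> b"
proof -
  have a: "a \<in> carrier S" and b: "b \<in> carrier S" using ab by (auto dest: rho_closedD)
  show "a \<otimes> sinv a = b \<otimes> sinv b"
    by (rule idem_rho_eq) (use a b rho_mult[OF ab sinv_rho[OF ab]] in simp_all)
  show "sinv a \<otimes> a = sinv b \<otimes> b"
    by (rule idem_rho_eq) (use a b rho_mult[OF sinv_rho[OF ab] ab] in simp_all)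
qed

lemma rho_idem_class:
  assumes ne: "n \<sim> e" and e: "e \<otimes> e = e"
  shows "n \<otimes> sinv n = e" "sinv n \<otimes> n = e" "n \<otimes> e = n" "e \<otimes> n = n"
proof -
  have n: "n \<in> carrier S" and "e \<in> carrier S" using ne by (auto dest: rho_closedD)
  then have "sinv e = e" using e by (simp add: sinv_idem)
  then show ne1: "n \<otimes> sinv n = e" and ne2: "sinv n \<otimes> n = e"
    using rho_mult_sinv_eq[OF ne] e by simp_all
  show "n \<otimes> e = n" using n by (simp flip: ne2)
  show "e \<otimes> n = n" using n mult_sinv_mult_left[of n "sinv n"] by (simp flip: ne1 del: mult_sinv_mult_left)
qed

definition idem_class_group :: "'a \<Rightarrow> 'a monoid" where
  "idem_class_group e = \<lparr>carrier = \<rho> `` {e}, mult = mult S, one = e\<rparr>"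

lemma group_idem_class_group:
  assumes e: "e \<in> carrier S" "e \<otimes> e = e"
  shows "group (idem_class_group e)"
proof (rule groupI)
  fix a b assume "a \<in> carrier (idem_class_group e)" "b \<in> carrier (idem_class_group e)"
  then have "e \<otimes> e \<sim> a \<otimes> b" by (simp add: idem_class_group_def rho_mult)
  then show "a \<otimes>\<^bsub>idem_class_group e\<^esub> b \<in> carrier (idem_class_group e)"
    using e by (simp add: idem_class_group_def)
next
  fix a b c assume "a \<in> carrier (idem_class_group e)" "b \<in> carrier (idem_class_group e)"
    "c \<in> carrier (idem_class_group e)"
  then have "a \<in> carrier S" "b \<in> carrier S" "c \<in> carrier S"
    by (auto simp: idem_class_group_def dest: rho_closedD(2))
  then show "a \<otimes>\<^bsub>idem_class_group e\<^esub> b \<otimes>\<^bsub>idem_class_group e\<^esub> c =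
      a \<otimes>\<^bsub>idem_class_group e\<^esub> (b \<otimes>\<^bsub>idem_class_group e\<^esub> c)"
    by (simp add: idem_class_group_def)
next
  fix a assume "a \<in> carrier (idem_class_group e)"
  then have "a \<sim> e" by (simp add: idem_class_group_def rho_sym)
  then have "sinv a \<sim> e" and "sinv a \<otimes> a = e" and "e \<otimes> a = a"
    using sinv_rho[of a e] rho_idem_class[of a e] e by (simp_all add: sinv_idem)
  then show "\<one>\<^bsub>idem_class_group e\<^esub> \<otimes>\<^bsub>idem_class_group e\<^esub> a = a"
    and "\<exists>b\<in>carrier (idem_class_group e). b \<otimes>\<^bsub>idem_class_group e\<^esub> a = \<one>\<^bsub>idem_class_group e\<^esub>"
    by (auto simp: idem_class_group_def rho_sym)
qed (use e in \<open>simp add: idem_class_group_def\<close>)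

abbreviation T :: "'a set monoid" where "T \<equiv> sg_quot S \<rho>"

definition cls :: "'a \<Rightarrow> 'a set" where "cls a = \<rho> `` {a}"

definition rep :: "'a set \<Rightarrow> 'a" where "rep X = (SOME a. a \<in> X)"

lemma carrier_quot: "carrier T = carrier S // \<rho>"
  by (simp add: sg_quot_def)

lemma mult_quot: "X \<otimes>\<^bsub>T\<^esub> Y = cls (rep X \<otimes> rep Y)"
  by (simp add: sg_quot_def cls_def rep_def)

lemma cls_eq_iff: "a \<in> carrier S \<Longrightarrow> b \<in> carrier S \<Longrightarrow> cls a = cls b \<longleftrightarrow> a \<sim> b"
  unfolding cls_def using eq_equiv_class_iff[OF rho_equiv] by blast

lemma mem_cls_iff: "b \<in> cls a \<longleftrightarrow> a \<sim> b"
  by (simp add: cls_def)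

lemma cls_closed [simp]: "a \<in> carrier S \<Longrightarrow> cls a \<in> carrier T"
  unfolding carrier_quot cls_def by (rule quotientI)

lemma quot_cases:
  assumes "X \<in> carrier T"
  obtains a where "a \<in> carrier S" "X = cls a"
  using assms unfolding carrier_quot cls_def by (blast elim: quotientE)

lemma rep_cls_rho: "a \<in> carrier S \<Longrightarrow> rep (cls a) \<sim> a"
  using someI[of "\<lambda>b. b \<in> cls a" a] by (simp add: rep_def mem_cls_iff rho_sym)

lemma rep_closed [simp]: "X \<in> carrier T \<Longrightarrow> rep X \<in> carrier S"
  by (metis quot_cases rep_cls_rho rho_closedD(1))

lemma cls_rep [simp]: "X \<in> carrier T \<Longrightarrow> cls (rep X) = X"
  by (metis quot_cases rep_cls_rho rep_closed cls_eq_iff)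

lemma mult_cls [simp]: "a \<in> carrier S \<Longrightarrow> b \<in> carrier S \<Longrightarrow> cls a \<otimes>\<^bsub>T\<^esub> cls b = cls (a \<otimes> b)"
  unfolding mult_quot using rho_mult[OF rep_cls_rho rep_cls_rho] by (simp add: cls_eq_iff)

lemma quot_inverse_iff:
  assumes a: "a \<in> carrier S" and Y: "Y \<in> carrier T"
  shows "cls a \<otimes>\<^bsub>T\<^esub> Y \<otimes>\<^bsub>T\<^esub> cls a = cls a \<and> Y \<otimes>\<^bsub>T\<^esub> cls a \<otimes>\<^bsub>T\<^esub> Y = Y
    \<longleftrightarrow> Y = cls (sinv a)"
proof -
  obtain y where y: "y \<in> carrier S" "Y = cls y" using Y by (rule quot_cases)
  have "cls a \<otimes>\<^bsub>T\<^esub> Y \<otimes>\<^bsub>T\<^esub> cls a = cls a \<and> Y \<otimes>\<^bsub>T\<^esub> cls a \<otimes>\<^bsub>T\<^esub> Y = Y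
      \<longleftrightarrow> a \<otimes> y \<otimes> a \<sim> a \<and> y \<otimes> a \<otimes> y \<sim> y"
    using a y by (simp add: cls_eq_iff)
  also have "\<dots> \<longleftrightarrow> y \<sim> sinv a"
  proof
    assume y_inv: "y \<sim> sinv a"
    have "a \<otimes> y \<otimes> a \<sim> a \<otimes> sinv a \<otimes> a"
      using a y_inv by (intro rho_mult) simp_all
    moreover have "y \<otimes> a \<otimes> y \<sim> sinv a \<otimes> a \<otimes> sinv a"
      using a y_inv by (intro rho_mult) simp_all
    ultimately show "a \<otimes> y \<otimes> a \<sim> a \<and> y \<otimes> a \<otimes> y \<sim> y"
      using a rho_trans[OF _ rho_sym[OF y_inv]] by simp
  qed (use rho_inverse_imp_rho_sinv a y in blast)
  finally show ?thesis using a y by (simp add: cls_eq_iff rho_sym)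
qed

lemma inverse_semigroup_quot: "inverse_semigroup T"
  unfolding inverse_semigroup_def sg_semigroup_def
proof (intro conjI ballI)
  fix X Y Z assume "X \<in> carrier T" "Y \<in> carrier T" "Z \<in> carrier T"
  then show "X \<otimes>\<^bsub>T\<^esub> Y \<in> carrier T" and "X \<otimes>\<^bsub>T\<^esub> Y \<otimes>\<^bsub>T\<^esub> Z = X \<otimes>\<^bsub>T\<^esub> (Y \<otimes>\<^bsub>T\<^esub> Z)"
    by (elim quot_cases; simp)+
next
  fix X assume "X \<in> carrier T"
  then obtain a where "a \<in> carrier S" "X = cls a" by (rule quot_cases)
  then show "\<exists>!Y. Y \<in> carrier T \<and> X \<otimes>\<^bsub>T\<^esub> Y \<otimes>\<^bsub>T\<^esub> X = X \<and> Y \<otimes>\<^bsub>T\<^esub> X \<otimes>\<^bsub>T\<^esub> Y = Y"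
    using quot_inverse_iff by (metis cls_closed sinv_closed)
qed

sublocale quot: inv_semigroup T
  by (rule inv_semigroup.intro, rule inverse_semigroup_quot)

lemma sinv_cls [simp]: "a \<in> carrier S \<Longrightarrow> quot.sinv (cls a) = cls (sinv a)"
  by (rule quot.sinv_unique) (simp_all add: quot_inverse_iff[symmetric])

text \<open>The idempotent of S in the class X (quot.sinv X) of T; it does not depend on the
  representative because rho separates idempotents.\<close>

definition class_idem :: "'a set \<Rightarrow> 'a" where
  "class_idem X = rep X \<otimes> sinv (rep X)"

lemma class_idem_closed [simp]: "X \<in> carrier T \<Longrightarrow> class_idem X \<in> carrier S"
  by (simp add: class_idem_def)

lemma class_idem_idem [simp]: "X \<in> carrier T \<Longrightarrow> class_idem X \<otimes> class_idem X = class_idem X"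
  by (simp add: class_idem_def)

lemma class_idem_cls: "a \<in> carrier S \<Longrightarrow> class_idem (cls a) = a \<otimes> sinv a"
  unfolding class_idem_def using rho_mult_sinv_eq(1)[OF rep_cls_rho] .

lemma class_idem_composable:
  assumes X: "X \<in> carrier T" and t: "t \<in> carrier T" and "quot.composable X t"
  shows "class_idem (X \<otimes>\<^bsub>T\<^esub> t) = class_idem X"
proof -
  obtain a where a: "a \<in> carrier S" "X = cls a" using X by (rule quot_cases)
  obtain s where s: "s \<in> carrier S" "t = cls s" using t by (rule quot_cases)
  have "cls ((a \<otimes> s) \<otimes> sinv (a \<otimes> s)) = cls (a \<otimes> sinv a)"
    using quot.composable_range[OF X t \<open>quot.composable X t\<close>] a s by simp
  then have "(a \<otimes> s) \<otimes> sinv (a \<otimes> s) \<sim> a \<otimes> sinv a"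
    using a s cls_eq_iff[of "(a \<otimes> s) \<otimes> sinv (a \<otimes> s)" "a \<otimes> sinv a"] by (metis m_closed sinv_closed)
  then have "(a \<otimes> s) \<otimes> sinv (a \<otimes> s) = a \<otimes> sinv a"
    by (rule idem_rho_eq[rotated 4]) (use a s idem_mult_sinv in \<open>simp_all del: m_assoc\<close>)
  then show ?thesis using a s by (simp add: class_idem_cls del: m_assoc)
qed

definition G :: "('a set \<Rightarrow> 'a) monoid" where
  "G = product_group (carrier T) (\<lambda>X. idem_class_group (class_idem X))"

lemma group_G: "group G"
  unfolding G_def by (simp add: group_idem_class_group)

lemma carrier_G:
  "f \<in> carrier G \<longleftrightarrow> f \<in> extensional (carrier T) \<and> (\<forall>X\<in>carrier T. class_idem X \<sim> f X)"
  by (auto simp: G_def idem_class_group_def PiE_iff)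

lemma carrier_G_closed [simp]: "f \<in> carrier G \<Longrightarrow> X \<in> carrier T \<Longrightarrow> f X \<in> carrier S"
  by (auto simp: carrier_G dest: rho_closedD)

lemma mult_G: "f \<otimes>\<^bsub>G\<^esub> g = (\<lambda>X\<in>carrier T. f X \<otimes> g X)"
  by (simp add: G_def idem_class_group_def)

definition act :: "'a set \<Rightarrow> ('a set \<Rightarrow> 'a) \<Rightarrow> 'a set \<Rightarrow> 'a" where
  "act t f = (\<lambda>X\<in>carrier T. if quot.composable X t then f (X \<otimes>\<^bsub>T\<^esub> t) else class_idem X)"

lemma act_closed:
  assumes t: "t \<in> carrier T" and f: "f \<in> carrier G"
  shows "act t f \<in> carrier G"
  unfolding carrier_G
proof (intro conjI ballI)
  fix X assume X: "X \<in> carrier T"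
  have "class_idem (X \<otimes>\<^bsub>T\<^esub> t) \<sim> f (X \<otimes>\<^bsub>T\<^esub> t)" if "quot.composable X t"
    using f X t by (simp add: carrier_G)
  then show "class_idem X \<sim> act t f X"
    using X t by (simp add: act_def class_idem_composable)
qed (simp add: act_def)

lemma act_hom: assumes t: "t \<in> carrier T" shows "act t \<in> hom G G"
proof (rule homI)
  fix f g assume f: "f \<in> carrier G" and g: "g \<in> carrier G"
  show "act t (f \<otimes>\<^bsub>G\<^esub> g) = act t f \<otimes>\<^bsub>G\<^esub> act t g"
  proof
    fix X show "act t (f \<otimes>\<^bsub>G\<^esub> g) X = (act t f \<otimes>\<^bsub>G\<^esub> act t g) X"
      using t by (simp add: act_def mult_G)
  qed
qed (use t act_closed in blast)

lemma act_act:
  assumes t: "t \<in> carrier T" and u: "u \<in> carrier T"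
  shows "act t (act u f) = act (t \<otimes>\<^bsub>T\<^esub> u) f"
proof
  fix X show "act t (act u f) X = act (t \<otimes>\<^bsub>T\<^esub> u) f X"
  proof (cases "X \<in> carrier T \<and> quot.composable X t")
    case True
    then have X: "X \<in> carrier T" and Xt: "quot.composable X t" by auto
    have "act t (act u f) X = act u f (X \<otimes>\<^bsub>T\<^esub> t)"
      using X Xt by (simp add: act_def)
    also have "\<dots> = (if quot.composable (X \<otimes>\<^bsub>T\<^esub> t) u then f (X \<otimes>\<^bsub>T\<^esub> t \<otimes>\<^bsub>T\<^esub> u)
        else class_idem X)"
      using class_idem_composable[OF X t Xt] X t by (simp add: act_def)
    also have "\<dots> = act (t \<otimes>\<^bsub>T\<^esub> u) f X"
      using quot.composable_mult_iff[OF X t u] X t u Xt by (simp add: act_def)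
    finally show ?thesis .
  next
    case False
    then show ?thesis
      using quot.composable_mult_iff[of X t u] t u by (auto simp: act_def)
  qed
qed

lemma acts_by_endos_act: "acts_by_endos T G act"
  by (simp add: acts_by_endos_def act_hom act_act)

definition cocycle :: "'a \<Rightarrow> 'a set \<Rightarrow> 'a" where
  "cocycle s = (\<lambda>X\<in>carrier T. if quot.composable X (cls s)
     then rep X \<otimes> s \<otimes> sinv (rep (X \<otimes>\<^bsub>T\<^esub> cls s)) else class_idem X)"

lemma cocycle_closed:
  assumes s: "s \<in> carrier S"
  shows "cocycle s \<in> carrier G"
  unfolding carrier_G
proof (intro conjI ballI)
  fix X assume X: "X \<in> carrier T"
  show "class_idem X \<sim> cocycle s X"
  proof (cases "quot.composable X (cls s)")
    case True
    define a where "a = rep X"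
    have a: "a \<in> carrier S" "X = cls a" using X by (simp_all add: a_def)
    have "a \<otimes> s \<otimes> sinv (rep (X \<otimes>\<^bsub>T\<^esub> cls s)) \<sim> a \<otimes> s \<otimes> sinv (a \<otimes> s)"
      using a s by (intro rho_mult sinv_rho) (simp_all add: rep_cls_rho)
    also have "a \<otimes> s \<otimes> sinv (a \<otimes> s) = class_idem X"
      using class_idem_composable[OF X _ True] a s by (simp add: class_idem_cls)
    finally show ?thesis using True X by (simp add: cocycle_def a_def rho_sym)
  qed (use X in \<open>simp add: cocycle_def\<close>)
qed (simp add: cocycle_def)

lemma cocycle_fixed:
  assumes s: "s \<in> carrier S"
  shows "act (cls s \<otimes>\<^bsub>T\<^esub> quot.sinv (cls s)) (cocycle s) = cocycle s"
proof
  fix X show "act (cls s \<otimes>\<^bsub>T\<^esub> quot.sinv (cls s)) (cocycle s) X = cocycle s X"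
    using quot.composable_idem_iff[of X "cls s"] s
    by (auto simp: act_def cocycle_def quot.composable_def simp del: sinv_cls mult_cls)
qed

lemma cocycle_mult_apply:
  assumes s: "s \<in> carrier S" and v: "v \<in> carrier S" and X: "X \<in> carrier T"
    and Xs: "quot.composable X (cls s)" and Xsv: "quot.composable (X \<otimes>\<^bsub>T\<^esub> cls s) (cls v)"
  shows "cocycle (s \<otimes> v) X = cocycle s X \<otimes> cocycle v (X \<otimes>\<^bsub>T\<^esub> cls s)"
proof -
  define a where "a = rep X"
  define r where "r = rep (X \<otimes>\<^bsub>T\<^esub> cls s)"
  define q where "q = rep (X \<otimes>\<^bsub>T\<^esub> cls (s \<otimes> v))"
  have a: "a \<in> carrier S" "X = cls a" using X by (simp_all add: a_def)
  have r: "r \<sim> a \<otimes> s" using a s by (simp add: r_def rep_cls_rho)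
  then have "r \<in> carrier S" by (rule rho_closedD)
  have q: "q \<in> carrier S" using a s v by (simp add: q_def)
  have "quot.composable X (cls (s \<otimes> v))"
    using quot.composable_mult_iff[OF X, of "cls s" "cls v"] s v Xs Xsv by simp
  moreover have "rep (X \<otimes>\<^bsub>T\<^esub> cls s \<otimes>\<^bsub>T\<^esub> cls v) = q"
    using a s v by (simp add: q_def)
  ultimately have "cocycle s X \<otimes> cocycle v (X \<otimes>\<^bsub>T\<^esub> cls s)
      = (a \<otimes> s \<otimes> sinv r) \<otimes> (r \<otimes> v \<otimes> sinv q)"
    using X s v Xs Xsv by (simp add: cocycle_def a_def r_def del: mult_cls)
  also have "\<dots> = (a \<otimes> s) \<otimes> ((sinv r \<otimes> r) \<otimes> (v \<otimes> sinv q))"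
    using a s v q \<open>r \<in> carrier S\<close> by simp
  also have "\<dots> = (a \<otimes> s) \<otimes> ((sinv (a \<otimes> s) \<otimes> (a \<otimes> s)) \<otimes> (v \<otimes> sinv q))"
    using rho_mult_sinv_eq(2)[OF r] by simp
  also have "\<dots> = a \<otimes> (s \<otimes> v) \<otimes> sinv q"
    using a s v q mult_sinv_mult_left[of "a \<otimes> s" "v \<otimes> sinv q"] by (simp del: mult_sinv_mult_left)
  also have "\<dots> = cocycle (s \<otimes> v) X"
    using X \<open>quot.composable X (cls (s \<otimes> v))\<close> by (simp add: cocycle_def a_def q_def)
  finally show ?thesis ..
qed

lemma cocycle_mult:
  assumes s: "s \<in> carrier S" and v: "v \<in> carrier S"
  defines "k \<equiv> (cls s \<otimes>\<^bsub>T\<^esub> cls v) \<otimes>\<^bsub>T\<^esub> quot.sinv (cls s \<otimes>\<^bsub>T\<^esub> cls v)"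
  shows "cocycle (s \<otimes> v) = act k (cocycle s) \<otimes>\<^bsub>G\<^esub> act (cls s) (cocycle v)"
proof
  fix X
  show "cocycle (s \<otimes> v) X = (act k (cocycle s) \<otimes>\<^bsub>G\<^esub> act (cls s) (cocycle v)) X"
  proof (cases "X \<in> carrier T")
    case X: True
    have sv: "cls s \<otimes>\<^bsub>T\<^esub> cls v = cls (s \<otimes> v)" using s v by simp
    have comp_k: "quot.composable X k \<longleftrightarrow> quot.composable X (cls (s \<otimes> v))"
      unfolding k_def sv using s v by (intro quot.composable_idem_iff[OF X]) simp
    have comp_sv: "quot.composable X (cls (s \<otimes> v)) \<longleftrightarrow>
        quot.composable X (cls s) \<and> quot.composable (X \<otimes>\<^bsub>T\<^esub> cls s) (cls v)"
      using quot.composable_mult_iff[OF X, of "cls s" "cls v"] s v by simp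
    show ?thesis
    proof (cases "quot.composable X (cls (s \<otimes> v))")
      case True
      then have "X \<otimes>\<^bsub>T\<^esub> k = X"
        unfolding k_def sv quot.composable_def .
      with True show ?thesis
        using X s v comp_k comp_sv cocycle_mult_apply[OF s v X] by (simp add: mult_G act_def)
    next
      case False
      then have "act (cls s) (cocycle v) X = class_idem X"
        using X s v comp_sv class_idem_composable[OF X, of "cls s"]
        by (auto simp: act_def cocycle_def)
      then show ?thesis
        using X s v False comp_k by (simp add: mult_G act_def cocycle_def)
    qed
  qed (simp add: mult_G cocycle_def)
qed

lemma cocycle_inj:
  assumes s: "s \<in> carrier S" and s': "s' \<in> carrier S"
    and cls_eq: "cls s = cls s'" and cocycle_eq: "cocycle s = cocycle s'"
  shows "s = s'"
proof -
  \<comment> \<open>At X = cls (s \<otimes> sinv s) both cocycles have the form a \<otimes> _ \<otimes> sinv q with a \<in> X and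
    q \<in> cls s; multiplying by sinv a on the left and q on the right recovers s and s'.\<close>
  define X where "X = cls (s \<otimes> sinv s)"
  define a where "a = rep X"
  define q where "q = rep (cls s)"
  have X: "X \<in> carrier T" using s by (simp add: X_def)
  have comp: "quot.composable X (cls s)" and Xs: "X \<otimes>\<^bsub>T\<^esub> cls s = cls s"
    using s by (simp_all add: X_def quot.composable_def)
  have a: "a \<sim> s \<otimes> sinv s" using s by (simp add: a_def X_def rep_cls_rho)
  have q: "q \<sim> s" using s by (simp add: q_def rep_cls_rho)
  have q': "q \<sim> s'" using s' by (simp add: q_def rep_cls_rho cls_eq)
  have "a \<in> carrier S" "q \<in> carrier S" using a q by (auto dest: rho_closedD)
  have aa: "sinv a \<otimes> a = s \<otimes> sinv s"
    using rho_idem_class(2)[OF a] s by simp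
  also have "\<dots> = s' \<otimes> sinv s'"
    using rho_mult_sinv_eq(1)[OF rho_trans[OF rho_sym[OF q] q']] .
  finally have aa': "sinv a \<otimes> a = s' \<otimes> sinv s'" .
  have qq: "sinv q \<otimes> q = sinv s \<otimes> s" and qq': "sinv q \<otimes> q = sinv s' \<otimes> s'"
    using rho_mult_sinv_eq(2)[OF q] rho_mult_sinv_eq(2)[OF q'] by simp_all
  have "a \<otimes> s \<otimes> sinv q = a \<otimes> s' \<otimes> sinv q"
    using fun_cong[OF cocycle_eq, of X] X comp Xs cls_eq
    by (simp add: cocycle_def a_def q_def del: mult_cls)
  then have "sinv a \<otimes> (a \<otimes> s \<otimes> sinv q) \<otimes> q = sinv a \<otimes> (a \<otimes> s' \<otimes> sinv q) \<otimes> q"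
    by simp
  then have eq: "(sinv a \<otimes> a) \<otimes> s \<otimes> (sinv q \<otimes> q) = (sinv a \<otimes> a) \<otimes> s' \<otimes> (sinv q \<otimes> q)"
    using s s' \<open>a \<in> carrier S\<close> \<open>q \<in> carrier S\<close> by simp
  have "s = (sinv a \<otimes> a) \<otimes> s \<otimes> (sinv q \<otimes> q)"
    using s by (simp add: aa qq)
  also have "\<dots> = (sinv a \<otimes> a) \<otimes> s' \<otimes> (sinv q \<otimes> q)" by (fact eq)
  also have "\<dots> = s'"
    using s' by (simp add: aa' qq')
  finally show ?thesis .
qed

definition embed :: "'a \<Rightarrow> ('a set \<Rightarrow> 'a) \<times> 'a set" where
  "embed s = (cocycle s, cls s)"

lemma embed_hom: "embed \<in> hom S (lambda_sdp G T act)"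
proof (rule homI)
  fix s assume "s \<in> carrier S"
  then show "embed s \<in> carrier (lambda_sdp G T act)"
    using cocycle_closed cocycle_fixed
    by (simp add: lambda_sdp_def embed_def del: sinv_cls mult_cls)
next
  fix s v assume s: "s \<in> carrier S" and v: "v \<in> carrier S"
  then show "embed (s \<otimes> v) = embed s \<otimes>\<^bsub>lambda_sdp G T act\<^esub> embed v"
    using cocycle_mult[OF s v] by (simp add: lambda_sdp_def embed_def)
qed

lemma inj_on_embed: "inj_on embed (carrier S)"
  by (rule inj_onI) (auto simp: embed_def intro: cocycle_inj)

lemma rho_eq_embed_kernel:
  "\<rho> = {(x, y). x \<in> carrier S \<and> y \<in> carrier S \<and> snd (embed x) = snd (embed y)}"
proof -
  have "x \<sim> y \<longleftrightarrow> x \<in> carrier S \<and> y \<in> carrier S \<and> cls x = cls y" for x y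
    using cls_eq_iff rho_closedD by blast
  then show ?thesis by (auto simp: embed_def)
qed

definition transversal :: "('a set \<Rightarrow> 'a) \<Rightarrow> 'a set" where
  "transversal f = (\<lambda>X. f X \<otimes> rep X) ` carrier T"

lemma carrier_G_mult_class_idem:
  assumes "f \<in> carrier G" "X \<in> carrier T"
  shows "f X \<otimes> class_idem X = f X"
  using assms rho_idem_class(3)[OF rho_sym] by (simp add: carrier_G)

lemma transversal_in_class:
  assumes f: "f \<in> carrier G" and X: "X \<in> carrier T"
  shows "f X \<otimes> rep X \<in> X"
proof -
  have "class_idem X \<otimes> rep X \<sim> f X \<otimes> rep X"
    using f X by (intro rho_mult_right) (simp_all add: carrier_G)
  moreover have "class_idem X \<otimes> rep X = rep X"
    using X by (simp add: class_idem_def)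
  ultimately show ?thesis
    using X mem_cls_iff[of _ "rep X"] by simp
qed

lemma inj_on_transversal: "inj_on transversal (carrier G)"
proof (rule inj_onI)
  fix f g assume f: "f \<in> carrier G" and g: "g \<in> carrier G" and "transversal f = transversal g"
  then have f_in: "f X \<otimes> rep X \<in> (\<lambda>X. g X \<otimes> rep X) ` carrier T" if "X \<in> carrier T" for X
    using that by (auto simp: transversal_def)
  show "f = g"
  proof
    fix X show "f X = g X"
    proof (cases "X \<in> carrier T")
      case X: True
      obtain Y where Y: "Y \<in> carrier T" and fg: "f X \<otimes> rep X = g Y \<otimes> rep Y"
        using f_in[OF X] by blast
      have "X = Y"
        using quotient_disj[OF rho_equiv, of X Y] transversal_in_class[OF f X] transversal_in_class[OF g Y]
          X Y fg by (auto simp: carrier_quot)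
      then have "f X \<otimes> rep X \<otimes> sinv (rep X) = g X \<otimes> rep X \<otimes> sinv (rep X)"
        using fg by simp
      then show ?thesis
        using f g X carrier_G_mult_class_idem by (simp add: class_idem_def)
    next
      case False
      then show ?thesis using f g by (simp add: carrier_G extensional_def)
    qed
  qed
qed

end

theorem corollary3p3:
  fixes S :: "('a, 'b) monoid_scheme" and \<rho> :: "('a \<times> 'a) set"
  assumes "inverse_semigroup S" and "sg_congruence S \<rho>" and "idempotent_separating S \<rho>"
  shows "\<exists>(G :: 'a set list monoid) (act :: 'a set \<Rightarrow> 'a set list \<Rightarrow> 'a set list)
            (\<psi> :: 'a \<Rightarrow> 'a set list \<times> 'a set).
           group G \<and> acts_by_endos (sg_quot S \<rho>) G act \<and>
           \<psi> \<in> hom S (lambda_sdp G (sg_quot S \<rho>) act) \<and> inj_on \<psi> (carrier S) \<and>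
           \<rho> = {(x, y). x \<in> carrier S \<and> y \<in> carrier S \<and> snd (\<psi> x) = snd (\<psi> y)}"
proof -
  interpret idem_sep_congruence S \<rho>
    using assms by (intro idem_sep_congruence.intro inv_semigroup.intro idem_sep_congruence_axioms.intro)
  \<comment> \<open>The singleton list only serves to match the prescribed carrier type.\<close>
  define code where "code f = [transversal f]" for f
  have "inj_on code (carrier G)"
    using inj_on_transversal by (simp add: inj_on_def code_def)
  then have code: "code \<in> iso G (relabel G code)"
    by (rule relabel_iso[OF group_G])
  let ?\<psi> = "map_prod code id \<circ> embed"
  have hom: "map_prod code id \<in>
      hom (lambda_sdp G T act) (lambda_sdp (relabel G code) T (relabel_action G code act))"
    by (rule lambda_sdp_relabel_hom[OF inverse_semigroup_quot code acts_by_endos_act])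
  show ?thesis
  proof (intro exI conjI)
    show "group (relabel G code)"
      using \<open>inj_on code (carrier G)\<close> by (rule relabel_group[OF group_G])
    show "acts_by_endos T (relabel G code) (relabel_action G code act)"
      by (rule acts_by_endos_relabel[OF group_G code acts_by_endos_act])
    show "?\<psi> \<in> hom S (lambda_sdp (relabel G code) T (relabel_action G code act))"
      using embed_hom hom by (rule hom_compose)
    show "inj_on ?\<psi> (carrier S)"
      using inj_on_embed inj_on_subset[OF inj_on_lambda_sdp_relabel[OF code] hom_carrier[OF embed_hom]]
      by (rule comp_inj_on)
    show "\<rho> = {(x, y). x \<in> carrier S \<and> y \<in> carrier S \<and> snd (?\<psi> x) = snd (?\<psi> y)}"
      using rho_eq_embed_kernel by simp
  qed
qed

end
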